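(* Let $f:\mathbb{R}^p\times\mathbb{R}^n\to\mathbb{R}^n$, written $f(a,x)$ with parameters $a\in\mathbb{R}^p$ and variables $x\in\mathbb{R}^n$, be such that for every $a$ the map $f(a,\cdot)$ is differentiable (on an open set containing the box $[x]$ below), with Jacobian $\frac{\partial f}{\partial x}(a,x)$ with respect to $x$. Let $[x],[y],[z]\in\mathbb{IR}^n$, $[a]\in\mathbb{IR}^p$, $\tilde x\in[x]$ and $[X]\in\mathbb{IR}^{n\times n}$ satisfy: (i) $[x]\subseteq[z]$; (ii) $\{f(a,\tilde x): a\in[a]\}\subseteq[y]$; (iii) $\{\frac{\partial f}{\partial x}(a,x): a\in[a],\ x\in[x]\}\subseteq[X]$ (entrywise inclusion). Define the (parametric) Hansen–Sengupta image $$[x'] := \tilde x+\Gamma\bigl([X],\,-[y],\,[x]-\tilde x,\,[z]-\tilde x\bigr).$$ Then: (1) for every $a\in[a]$ and every $x\in[x]$ with $f(a,x)=0$, one has $x\in[x']$; (2) if $[x']\neq\emptyset$ and $[x']\subseteq\operatorname{int}[x]$, then for every $a\in[a]$ the map $f(a,\cdot)$ has a unique zero in $[x']$.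
   Context: $\mathbb{IR}^n$ denotes the set of closed interval vectors (boxes) of dimension $n$ and $\mathbb{IR}^{n\times n}$ the set of $n\times n$ interval matrices; sums and products of intervals are those of (extended) interval arithmetic, and subtracting a real vector from an interval vector is done componentwise. For a set $S\subseteq\mathbb{R}$, $\Box S$ denotes its interval hull (smallest closed interval containing $S$, possibly unbounded; $\Box\emptyset=\emptyset$). One-dimensional Gauss–Seidel: for intervals $[\alpha],[\beta],[\xi]$, $$\gamma([\alpha],[\beta],[\xi]):=\Box\{x\in[\xi]:\ \exists \alpha\in[\alpha],\ \exists\beta\in[\beta],\ \alpha x=\beta\}$$ (when $0\notin[\alpha]$ this equals $([\beta]/[\alpha])\cap[\xi]$). Multidimensional interval Gauss–Seidel: for $[A]\in\mathbb{IR}^{n\times n}$ with entries $[A_{ij}]$, and $[b],[u],[w]\in\mathbb{IR}^n$, $\Gamma([A],[b],[u],[w]):=[u']$ where the components are computed successively for $i=1,\dots,n$ by $$[u'_i]:=\gamma\Bigl([A_{ii}],\ [b_i]-\sum_{j<i}[A_{ij}][u'_j]-\sum_{j>i}[A_{ij}][u_j],\ [w_i]\Bigr).$$ If some component is empty, $[u']$ is the empty set. *)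

theory Defs
  imports "HOL-Analysis.Analysis"
begin

text \<open>Intervals (elements of IR) are represented as sets of reals; all intervals occurring
below are closed and bounded (possibly empty), and on such sets the interval operations
coincide with the elementwise set operations defined here.\<close>

definition iadd :: "real set \<Rightarrow> real set \<Rightarrow> real set" where
  "iadd A B = {a + b | a b. a \<in> A \<and> b \<in> B}"

definition isub :: "real set \<Rightarrow> real set \<Rightarrow> real set" where
  "isub A B = {a - b | a b. a \<in> A \<and> b \<in> B}"

definition imul :: "real set \<Rightarrow> real set \<Rightarrow> real set" where
  "imul A B = {a * b | a b. a \<in> A \<and> b \<in> B}"

definition ilsum :: "real set list \<Rightarrow> real set" where
  "ilsum xs = foldr iadd xs {0}"

text \<open>Interval hull: smallest closed interval containing S (possibly unbounded; hull of {} is {}).\<close>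
definition ihull :: "real set \<Rightarrow> real set" where
  "ihull S = closure (convex hull S)"

definition gamma1 :: "real set \<Rightarrow> real set \<Rightarrow> real set \<Rightarrow> real set" where
  "gamma1 Al Be Xi = ihull {x \<in> Xi. \<exists>\<alpha>\<in>Al. \<exists>\<beta>\<in>Be. \<alpha> * x = \<beta>}"

text \<open>One Gauss-Seidel update of component i: U holds new components for already processed
indices and old ones for the others.\<close>
definition gs_step ::
  "('n::{finite,linorder} \<Rightarrow> 'n \<Rightarrow> real set) \<Rightarrow> ('n \<Rightarrow> real set) \<Rightarrow> ('n \<Rightarrow> real set)
    \<Rightarrow> ('n \<Rightarrow> real set) \<Rightarrow> 'n \<Rightarrow> ('n \<Rightarrow> real set)" where
  "gs_step A b w U i = U(i := gamma1 (A i i)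
      (isub (b i) (ilsum (map (\<lambda>j. imul (A i j) (U j)) (sorted_list_of_set (UNIV - {i})))))
      (w i))"

text \<open>Multidimensional interval Gauss-Seidel Gamma([A],[b],[u],[w]), components processed in
increasing index order; the result is the box (set of vectors) of the new components,
which is empty as soon as one component is empty.\<close>
definition GS ::
  "('n::{finite,linorder} \<Rightarrow> 'n \<Rightarrow> real set) \<Rightarrow> ('n \<Rightarrow> real set) \<Rightarrow> ('n \<Rightarrow> real set)
    \<Rightarrow> ('n \<Rightarrow> real set) \<Rightarrow> (real^'n::{finite,linorder}) set" where
  "GS A b u w =
     (let U = foldl (gs_step A b w) u (sorted_list_of_set UNIV)
      in {v. \<forall>i. v $ i \<in> U i})"

end

theory Submission
  imports Defs
begin

(* Fix a parameter a and write g = f(a,.), u = x - xt.  By the mean value theorem applied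
   row by row, g(x)_i = g(xt)_i + sum_j alpha_ij u_j with alpha_ij in [X_ij].  Hence, if
   u already lies in the box produced by the Gauss-Seidel sweep before row i, then
   g(x)_i = alpha_ii u_i - beta with beta in the right-hand side interval of row i.
   (1) If g(x) = 0 this says alpha_ii u_i = beta, so u_i survives the one-dimensional
       Gauss-Seidel step; inducting over the sweep puts x in the image [x'].
   (2) If [x'] is nonempty and strictly inside [x], every diagonal interval [X_ii]
       excludes 0 and every quotient beta/alpha_ii lies strictly inside [x_i] - xt_i.
       A Brouwer fixed point of the clamped map x_i -> x_i - sigma_i g(x)_i (sigma_i the
       sign of [X_ii]) then satisfies u_i = beta/alpha_ii row by row, so it lies in [x'],
       hence in the interior, where clamping is inactive and g(x) = 0.  Applying the
       same two facts to linear maps shows every matrix in [X] is regular, which by the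
       mean value theorem gives uniqueness. *)


subsection \<open>Interval arithmetic on sets of reals\<close>

text \<open>Pointwise images of connected sets under a continuous binary operation are connected;
  this keeps all intervals produced by the Gauss-Seidel sweep connected.\<close>

lemma connected_pointwise_image:
  fixes op :: "real \<Rightarrow> real \<Rightarrow> real"
  assumes "connected A" "connected B" "continuous_on UNIV (\<lambda>p. op (fst p) (snd p))"
  shows "connected {op a b | a b. a \<in> A \<and> b \<in> B}"
proof -
  have "{op a b | a b. a \<in> A \<and> b \<in> B} = (\<lambda>p. op (fst p) (snd p)) ` (A \<times> B)"
    by force
  moreover have "connected ((\<lambda>p. op (fst p) (snd p)) ` (A \<times> B))"
    using assms by (intro connected_continuous_image connected_Times)
      (auto intro: continuous_on_subset)
  ultimately show ?thesis by simp
qed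

lemma connected_iadd: "connected A \<Longrightarrow> connected B \<Longrightarrow> connected (iadd A B)"
  unfolding iadd_def by (rule connected_pointwise_image) (auto intro!: continuous_intros)

lemma connected_isub: "connected A \<Longrightarrow> connected B \<Longrightarrow> connected (isub A B)"
  unfolding isub_def by (rule connected_pointwise_image) (auto intro!: continuous_intros)

lemma connected_imul: "connected A \<Longrightarrow> connected B \<Longrightarrow> connected (imul A B)"
  unfolding imul_def by (rule connected_pointwise_image) (auto intro!: continuous_intros)

lemma connected_ilsum: "\<forall>S\<in>set L. connected S \<Longrightarrow> connected (ilsum L)"
  by (induction L) (auto simp: ilsum_def intro: connected_iadd)

lemma ilsum_mem: "\<forall>j\<in>set L. c j \<in> S j \<Longrightarrow> sum_list (map c L) \<in> ilsum (map S L)"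
  by (induction L) (auto simp: ilsum_def iadd_def)

lemma ilsum_mem_set:
  assumes "finite A" "\<forall>j\<in>A. c j \<in> S j"
  shows "(\<Sum>j\<in>A. c j) \<in> ilsum (map S (sorted_list_of_set A))"
  using ilsum_mem[of "sorted_list_of_set A" c S] assms
  by (simp add: sum_list_distinct_conv_sum_set)


subsection \<open>The one-dimensional Gauss-Seidel operator\<close>

lemma ihull_subset: "S \<subseteq> ihull S"
  unfolding ihull_def by (rule subset_trans[OF hull_subset closure_subset])

lemma mem_gamma1:
  "u \<in> W \<Longrightarrow> \<alpha> \<in> Al \<Longrightarrow> \<beta> \<in> Be \<Longrightarrow> \<alpha> * u = \<beta> \<Longrightarrow> u \<in> gamma1 Al Be W"
  unfolding gamma1_def by (rule subsetD[OF ihull_subset]) blast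

lemma gamma1_nonempty:
  "gamma1 Al Be W \<noteq> {} \<Longrightarrow> \<exists>u\<in>W. \<exists>\<alpha>\<in>Al. \<exists>\<beta>\<in>Be. \<alpha> * u = \<beta>"
  unfolding gamma1_def ihull_def by auto

lemma connected_gamma1: "connected (gamma1 Al Be W)"
  unfolding gamma1_def ihull_def
  by (intro convex_connected convex_closure convex_convex_hull)

lemma scaled_mem_Icc:
  fixes c d x q :: real
  assumes "c \<le> 0" "0 \<le> d" "x \<in> {c..d}" "0 \<le> q" "q \<le> 1"
  shows "x * q \<in> {c..d}"
proof -
  have "(1 - q) *\<^sub>R 0 + q *\<^sub>R x \<in> {c..d}"
    using assms by (intro convexD_alt convex_real_interval(5)) auto
  then show ?thesis by (simp add: mult.commute)
qed

text \<open>If gamma is nonempty and lies strictly inside an interval contained in the domain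
  interval W, then the diagonal coefficient interval does not contain 0: otherwise the
  zero set of some equation alpha u = beta would reach an endpoint.\<close>

lemma gamma1_interior_excludes_zero:
  fixes c d l h :: real
  assumes W: "{l..h} \<subseteq> W"
    and ne: "gamma1 {c..d} B W \<noteq> {}" and sub: "gamma1 {c..d} B W \<subseteq> {l<..<h}"
  shows "0 < c \<or> d < 0"
proof (rule ccontr)
  assume "\<not> (0 < c \<or> d < 0)"
  then have cd: "c \<le> 0" "0 \<le> d" by auto
  obtain u0 \<alpha>0 \<beta>0 where u0: "u0 \<in> W" "\<alpha>0 \<in> {c..d}" "\<beta>0 \<in> B" "\<alpha>0 * u0 = \<beta>0"
    using gamma1_nonempty[OF ne] by blast
  have "u0 \<in> {l<..<h}" using sub mem_gamma1[OF u0] by blast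
  then have lh: "l < u0" "u0 < h" "l \<in> W" "h \<in> W" using W by auto
  show False
  proof (cases "u0 = 0")
    case True
    have "(0::real) \<in> {c..d}" "0 * l = \<beta>0" using cd u0(4) True by auto
    then have "l \<in> gamma1 {c..d} B W" by (intro mem_gamma1[OF lh(3) _ u0(3)])
    then show False using sub by auto
  next
    case False
    define e where "e = (if 0 < u0 then h else l)"
    have q: "0 \<le> u0 / e" "u0 / e \<le> 1" "e \<noteq> 0"
      using False lh unfolding e_def by (auto simp: field_simps)
    have e: "e \<in> W" "e \<notin> {l<..<h}" using lh unfolding e_def by auto
    have "\<alpha>0 * (u0 / e) \<in> {c..d}" using scaled_mem_Icc[OF cd u0(2) q(1,2)] .
    moreover have "\<alpha>0 * (u0 / e) * e = \<beta>0" using u0(4) q(3) by simp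
    ultimately have "e \<in> gamma1 {c..d} B W" by (intro mem_gamma1[OF e(1) _ u0(3)])
    then show False using sub e(2) by auto
  qed
qed

text \<open>Under the same hypotheses and a connected right-hand side B, every quotient beta/alpha
  lies strictly inside the interval: the set of all quotients is connected, meets the
  interior of the interval, and cannot reach an endpoint without that endpoint entering
  gamma.\<close>

lemma gamma1_interior_quotients:
  fixes c d l h :: real
  assumes W: "{l..h} \<subseteq> W" and B: "connected B"
    and ne: "gamma1 {c..d} B W \<noteq> {}" and sub: "gamma1 {c..d} B W \<subseteq> {l<..<h}"
    and \<alpha>: "\<alpha> \<in> {c..d}" and \<beta>: "\<beta> \<in> B"
  shows "\<beta> / \<alpha> \<in> {l<..<h}"
proof -
  have nz: "a \<noteq> 0" if "a \<in> {c..d}" for a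
    using gamma1_interior_excludes_zero[OF W ne sub] that by auto
  define Q where "Q = (\<lambda>p. fst p / snd p) ` (B \<times> {c..d})"
  have "continuous_on (B \<times> {c..d}) (\<lambda>p. fst p / snd p)"
    using nz by (intro continuous_intros) auto
  then have Q_conn: "connected Q"
    unfolding Q_def by (intro connected_continuous_image connected_Times B connected_Icc)
  have Q_gamma: "z \<in> gamma1 {c..d} B W" if z: "z \<in> Q" "z \<in> W" for z
  proof -
    obtain b a where ab: "b \<in> B" "a \<in> {c..d}" "z = b / a" using z(1) unfolding Q_def by auto
    then have "a * z = b" using nz by simp
    then show ?thesis by (rule mem_gamma1[OF z(2) ab(2,1)])
  qed
  obtain r a b where r: "r \<in> W" "a \<in> {c..d}" "b \<in> B" "a * r = b"
    using gamma1_nonempty[OF ne] by blast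
  have "r = b / a" using r nz by (auto simp: field_simps)
  then have rQ: "r \<in> Q" unfolding Q_def using r by (intro image_eqI[where x="(b, a)"]) auto
  have r_in: "l < r" "r < h" using sub mem_gamma1[OF r] by auto
  have qQ: "\<beta> / \<alpha> \<in> Q" unfolding Q_def using \<alpha> \<beta> by (intro image_eqI[where x="(\<beta>, \<alpha>)"]) auto
  have endpoint: "e \<notin> Q" if "e \<in> {l, h}" for e
  proof
    assume "e \<in> Q"
    moreover have "e \<in> W" "e \<notin> {l<..<h}" using that r_in W by auto
    ultimately show False using Q_gamma sub by blast
  qed
  show ?thesis
  proof (rule ccontr)
    assume "\<beta> / \<alpha> \<notin> {l<..<h}"
    then consider "\<beta> / \<alpha> \<le> l" | "h \<le> \<beta> / \<alpha>" by fastforce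
    then show False
    proof cases
      case 1
      then have "l \<in> Q" using connectedD_interval[OF Q_conn qQ rQ] r_in by simp
      then show False using endpoint by simp
    next
      case 2
      then have "h \<in> Q" using connectedD_interval[OF Q_conn rQ qQ] r_in by simp
      then show False using endpoint by simp
    qed
  qed
qed


subsection \<open>Bookkeeping of the Gauss-Seidel sweep\<close>

definition gs_rhs ::
  "('n::{finite,linorder} \<Rightarrow> 'n \<Rightarrow> real set) \<Rightarrow> ('n \<Rightarrow> real set) \<Rightarrow> ('n \<Rightarrow> real set)
    \<Rightarrow> 'n \<Rightarrow> real set" where
  "gs_rhs A b V i =
     isub (b i) (ilsum (map (\<lambda>j. imul (A i j) (V j)) (sorted_list_of_set (UNIV - {i}))))"

definition gs_state ::
  "('n::{finite,linorder} \<Rightarrow> 'n \<Rightarrow> real set) \<Rightarrow> ('n \<Rightarrow> real set) \<Rightarrow> ('n \<Rightarrow> real set)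
    \<Rightarrow> ('n \<Rightarrow> real set) \<Rightarrow> 'n \<Rightarrow> 'n \<Rightarrow> real set" where
  "gs_state A b u w i = foldl (gs_step A b w) u (filter (\<lambda>j. j < i) (sorted_list_of_set UNIV))"

definition gs_result ::
  "('n::{finite,linorder} \<Rightarrow> 'n \<Rightarrow> real set) \<Rightarrow> ('n \<Rightarrow> real set) \<Rightarrow> ('n \<Rightarrow> real set)
    \<Rightarrow> ('n \<Rightarrow> real set) \<Rightarrow> 'n \<Rightarrow> real set" where
  "gs_result A b u w = foldl (gs_step A b w) u (sorted_list_of_set UNIV)"

lemma gs_step_rhs: "gs_step A b w V i = V(i := gamma1 (A i i) (gs_rhs A b V i) (w i))"
  by (simp add: gs_step_def gs_rhs_def)

lemma GS_eq: "GS A b u w = {v. \<forall>i. v $ i \<in> gs_result A b u w i}"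
  by (simp add: GS_def gs_result_def)

lemma foldl_gs_step_other: "k \<notin> set L \<Longrightarrow> foldl (gs_step A b w) V L k = V k"
  by (induction L arbitrary: V) (auto simp: gs_step_def)

lemma sorted_UNIV_prefix:
  assumes "sorted_list_of_set (UNIV :: 'n::{finite,linorder} set) = L1 @ i # L2"
  shows "filter (\<lambda>j. j < i) (sorted_list_of_set (UNIV :: 'n set)) = L1"
proof -
  have "sorted_wrt (<) (L1 @ i # L2)"
    using strict_sorted_list_of_set[of "UNIV :: 'n set"] assms by simp
  then have "\<forall>j\<in>set L1. j < i" "\<forall>j\<in>set L2. \<not> j < i"
    by (auto simp: sorted_wrt_append)
  then show ?thesis using assms by simp
qed

lemma sorted_UNIV_split:
  obtains L1 L2 where "sorted_list_of_set (UNIV :: 'n::{finite,linorder} set) = L1 @ i # L2"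
  using split_list[of i "sorted_list_of_set (UNIV :: 'n set)"] that by auto

lemma gs_result_component:
  "gs_result A b u w i = gamma1 (A i i) (gs_rhs A b (gs_state A b u w i) i) (w i)"
proof -
  obtain L1 L2 where L: "sorted_list_of_set (UNIV :: 'a set) = L1 @ i # L2"
    using sorted_UNIV_split by blast
  have "i \<notin> set L2"
    using distinct_sorted_list_of_set[of "UNIV :: 'a set"] L by simp
  moreover have "gs_state A b u w i = foldl (gs_step A b w) u L1"
    unfolding gs_state_def sorted_UNIV_prefix[OF L] ..
  ultimately show ?thesis
    unfolding gs_result_def L by (simp add: foldl_gs_step_other gs_step_def gs_rhs_def)
qed

lemma mem_GS:
  fixes v :: "real^'n::{finite,linorder}"
  assumes init: "\<forall>j. v $ j \<in> u j"
    and row: "\<And>i. \<forall>j. v $ j \<in> gs_state A b u w i j \<Longrightarrow>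
                  v $ i \<in> gamma1 (A i i) (gs_rhs A b (gs_state A b u w i) i) (w i)"
  shows "v \<in> GS A b u w"
proof -
  have "\<forall>j. v $ j \<in> foldl (gs_step A b w) u L1 j"
    if "sorted_list_of_set (UNIV :: 'n set) = L1 @ L2" for L1 L2
    using that
  proof (induction L1 arbitrary: L2 rule: rev_induct)
    case Nil
    then show ?case using init by simp
  next
    case (snoc i L1)
    then have state: "foldl (gs_step A b w) u L1 = gs_state A b u w i"
      unfolding gs_state_def using sorted_UNIV_prefix[of L1 i L2] by simp
    have v_state: "\<forall>j. v $ j \<in> gs_state A b u w i j"
      using snoc.IH[of "i # L2"] snoc.prems state by simp
    have "foldl (gs_step A b w) u (L1 @ [i]) = gs_step A b w (gs_state A b u w i) i"
      using state by simp
    also have "\<dots> = (gs_state A b u w i)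
                        (i := gamma1 (A i i) (gs_rhs A b (gs_state A b u w i) i) (w i))"
      by (rule gs_step_rhs)
    finally show ?case using row[OF v_state] v_state by simp
  qed
  from this[of _ "[]"] show ?thesis by (simp add: GS_eq gs_result_def)
qed

text \<open>Every box met during the sweep has connected components, since each update is an
  interval hull; hence the right-hand sides are connected as well.\<close>

lemma connected_gs_state:
  assumes "\<forall>j. connected (u j)"
  shows "connected (gs_state A b u w i j)"
proof -
  have "connected (foldl (gs_step A b w) V L j)" if "\<forall>j. connected (V j)" for V L
    using that by (induction L arbitrary: V) (auto simp: gs_step_rhs connected_gamma1)
  then show ?thesis using assms unfolding gs_state_def by blast
qed

lemma connected_gs_rhs:
  assumes "\<forall>j. connected (V j)" "\<forall>j. connected (A i j)" "connected (b i)"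
  shows "connected (gs_rhs A b V i)"
  unfolding gs_rhs_def using assms
  by (intro connected_isub connected_ilsum) (auto intro: connected_imul)

lemma mem_gs_rhs:
  fixes v :: "real^'n::{finite,linorder}"
  assumes "\<beta> \<in> b i" "\<forall>j. v $ j \<in> V j" "\<forall>j. a j \<in> A i j"
  shows "\<beta> - (\<Sum>j\<in>UNIV - {i}. a j * v $ j) \<in> gs_rhs A b V i"
proof -
  have "(\<Sum>j\<in>UNIV - {i}. a j * v $ j)
          \<in> ilsum (map (\<lambda>j. imul (A i j) (V j)) (sorted_list_of_set (UNIV - {i})))"
    using ilsum_mem_set[of "UNIV - {i}" "\<lambda>j. a j * v $ j" "\<lambda>j. imul (A i j) (V j)"] assms(2,3)
    by (auto simp: imul_def)
  then show ?thesis using assms(1) unfolding gs_rhs_def isub_def by blast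
qed


subsection \<open>Analytic tools\<close>

lemma mvt_row:
  fixes g :: "real^'n \<Rightarrow> real^'m" and Jg :: "real^'n \<Rightarrow> real^'n^'m"
  assumes der: "\<And>x. x \<in> D \<Longrightarrow> (g has_derivative (\<lambda>h. Jg x *v h)) (at x)"
    and sub: "cbox lo hi \<subseteq> D" and p: "p \<in> cbox lo hi" and q: "q \<in> cbox lo hi"
  shows "\<exists>\<xi>\<in>cbox lo hi. g q $ i - g p $ i = (\<Sum>j\<in>UNIV. Jg \<xi> $ i $ j * (q - p) $ j)"
proof -
  define c where "c t = p + t *\<^sub>R (q - p)" for t :: real
  have c_in: "c t \<in> cbox lo hi" if "0 \<le> t" "t \<le> 1" for t
  proof -
    have "c t = (1 - t) *\<^sub>R p + t *\<^sub>R q" unfolding c_def by (simp add: algebra_simps)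
    then show ?thesis using convex_box(1)[of lo hi] p q that unfolding convex_alt by auto
  qed
  have dc: "(c has_derivative (\<lambda>s. s *\<^sub>R (q - p))) (at t within {0..1})" for t
    unfolding c_def by (auto intro!: derivative_eq_intros)
  have "((\<lambda>t. g (c t) $ i) has_derivative (\<lambda>s. (Jg (c t) *v (s *\<^sub>R (q - p))) $ i))
          (at t within {0..1})" if "0 \<le> t" "t \<le> 1" for t
  proof -
    have "(g has_derivative (\<lambda>h. Jg (c t) *v h)) (at (c t) within c ` {0..1})"
      using der[of "c t"] c_in[OF that] sub by (auto intro: has_derivative_subset)
    from diff_chain_within[OF dc this]
    have "((\<lambda>t. g (c t)) has_derivative (\<lambda>s. Jg (c t) *v (s *\<^sub>R (q - p))))
            (at t within {0..1})"
      by (simp add: o_def)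
    then show ?thesis by (rule bounded_linear.has_derivative[OF bounded_linear_vec_nth])
  qed
  from mvt_very_simple[of 0 1 "\<lambda>t. g (c t) $ i", OF _ this]
  obtain t where "t \<in> {0..1}" "g (c 1) $ i - g (c 0) $ i = (Jg (c t) *v (q - p)) $ i"
    by auto
  moreover have "c 1 = q" "c 0 = p" unfolding c_def by auto
  ultimately show ?thesis using c_in[of t]
    by (auto simp: matrix_vector_mult_def intro!: bexI[of _ "c t"])
qed

lemma clamped_map_fixed_point:
  fixes g :: "real^'n \<Rightarrow> real^'n" and \<sigma> :: "'n \<Rightarrow> real"
  assumes "cbox lo hi \<noteq> {}" "continuous_on (cbox lo hi) g"
  obtains x where "x \<in> cbox lo hi"
    "\<And>i. x $ i = max (lo $ i) (min (hi $ i) (x $ i - \<sigma> i * g x $ i))"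
proof -
  define T where "T x = (\<chi> i. max (lo $ i) (min (hi $ i) (x $ i - \<sigma> i * g x $ i)))" for x
  have "continuous_on (cbox lo hi) T" unfolding T_def by (intro continuous_intros assms(2))
  moreover obtain x0 where "x0 \<in> cbox lo hi" using assms(1) by blast
  then have "lo $ i \<le> hi $ i" for i unfolding mem_box_cart by (meson order_trans)
  then have "T \<in> cbox lo hi \<rightarrow> cbox lo hi" unfolding T_def by (auto simp: mem_box_cart)
  ultimately obtain x where x: "x \<in> cbox lo hi" "T x = x"
    using brouwer[OF compact_cbox convex_box(1) assms(1)] by blast
  have "x $ i = max (lo $ i) (min (hi $ i) (x $ i - \<sigma> i * g x $ i))" for i
    using arg_cong[OF x(2), of "\<lambda>v. v $ i"] unfolding T_def by simp
  with x(1) show ?thesis by (rule that)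
qed

lemma clamp_fixed_point_root:
  fixes lo hi x s a \<beta> x0 :: real
  assumes "lo \<le> x" "x \<le> hi" "x = max lo (min hi (x - s * (a * (x - x0) - \<beta>)))"
    and "s * a > 0" "lo - x0 < \<beta> / a" "\<beta> / a < hi - x0"
  shows "x - x0 = \<beta> / a"
proof -
  have "a \<noteq> 0" using assms(4) by auto
  define d where "d = (x - x0) - \<beta> / a"
  have sg: "s * (a * (x - x0) - \<beta>) = (s * a) * d"
    unfolding d_def using \<open>a \<noteq> 0\<close> by (simp add: field_simps)
  consider "d < 0" | "d = 0" | "d > 0" by linarith
  then show ?thesis
  proof cases
    case 1
    then have "(s * a) * d < 0" "x < hi" using assms(4,6) unfolding d_def
      by (auto simp: mult_pos_neg)
    then show ?thesis using assms(3) unfolding sg by linarith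
  next
    case 2
    then show ?thesis unfolding d_def by simp
  next
    case 3
    then have "(s * a) * d > 0" "x > lo" using assms(4,5) unfolding d_def by auto
    then show ?thesis using assms(3) unfolding sg by linarith
  qed
qed

lemma clamp_fixed_point_interior:
  fixes lo hi x s y :: real
  assumes "lo < x" "x < hi" "x = max lo (min hi (x - s * y))" "s \<noteq> 0"
  shows "y = 0"
proof -
  have "s * y = 0" using assms(1-3) by linarith
  then show ?thesis using assms(4) by simp
qed

lemma product_set_in_box:
  fixes U :: "'n::finite \<Rightarrow> real set" and c lo hi :: "real^'n"
  assumes ne: "{v. \<forall>i. v $ i \<in> U i} \<noteq> {}"
    and sub: "(\<lambda>v. c + v) ` {v. \<forall>i. v $ i \<in> U i} \<subseteq> box lo hi"
  shows "U i \<noteq> {}" "U i \<subseteq> {lo $ i - c $ i <..< hi $ i - c $ i}"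
proof -
  obtain v0 where v0: "\<forall>k. v0 $ k \<in> U k" using ne by auto
  then show "U i \<noteq> {}" by blast
  show "U i \<subseteq> {lo $ i - c $ i <..< hi $ i - c $ i}"
  proof
    fix t assume "t \<in> U i"
    then have "(\<chi> k. if k = i then t else v0 $ k) \<in> {v. \<forall>i. v $ i \<in> U i}" using v0 by auto
    then have "c + (\<chi> k. if k = i then t else v0 $ k) \<in> box lo hi" using sub by blast
    then have "lo $ i < (c + (\<chi> k. if k = i then t else v0 $ k)) $ i
        \<and> (c + (\<chi> k. if k = i then t else v0 $ k)) $ i < hi $ i"
      unfolding mem_box_cart by blast
    then show "t \<in> {lo $ i - c $ i <..< hi $ i - c $ i}" by simp
  qed
qed


subsection \<open>The Hansen-Sengupta image\<close>

context
  fixes xlo xhi ylo yhi zlo zhi xt :: "real^'n::{finite,linorder}"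
    and Xlo Xhi :: "real^'n::{finite,linorder}^'n::{finite,linorder}"
  assumes xt_in: "xt \<in> cbox xlo xhi"
    and x_sub_z: "cbox xlo xhi \<subseteq> cbox zlo zhi"
begin

text \<open>The data of the theorem: the interval Jacobian [X], the right-hand side -[y], the
  shifted boxes [x] - xt and [z] - xt, and the Hansen-Sengupta image [x'].\<close>

abbreviation (input) XI :: "'n::{finite,linorder} \<Rightarrow> 'n \<Rightarrow> real set"
  where "XI \<equiv> \<lambda>i j. {Xlo $ i $ j .. Xhi $ i $ j}"
abbreviation (input) BI :: "'n::{finite,linorder} \<Rightarrow> real set"
  where "BI \<equiv> \<lambda>i. uminus ` {ylo $ i .. yhi $ i}"
abbreviation (input) KI :: "'n::{finite,linorder} \<Rightarrow> real set"
  where "KI \<equiv> \<lambda>i. {xlo $ i - xt $ i .. xhi $ i - xt $ i}"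
abbreviation (input) WI :: "'n::{finite,linorder} \<Rightarrow> real set"
  where "WI \<equiv> \<lambda>i. {zlo $ i - xt $ i .. zhi $ i - xt $ i}"
abbreviation (input) HS :: "(real^'n::{finite,linorder}) set"
  where "HS \<equiv> (\<lambda>v. xt + v) ` GS XI BI KI WI"

lemma K_sub_W: "KI i \<subseteq> WI i"
proof -
  have "xlo $ j \<le> xhi $ j" for j using xt_in unfolding mem_box_cart by (meson order_trans)
  then have "xlo \<in> cbox xlo xhi" "xhi \<in> cbox xlo xhi" by (auto simp: mem_box_cart)
  then have "xlo \<in> cbox zlo zhi" "xhi \<in> cbox zlo zhi" using x_sub_z by blast+
  then have "zlo $ i \<le> xlo $ i" "xhi $ i \<le> zhi $ i" unfolding mem_box_cart by auto
  then show ?thesis by auto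
qed

lemma shifted_mem_W:
  assumes "x \<in> cbox xlo xhi" shows "(x - xt) $ i \<in> WI i"
proof -
  have "(x - xt) $ i \<in> KI i" using assms by (simp add: mem_box_cart)
  then show ?thesis using K_sub_W by blast
qed

lemma HS_interior_diagonal:
  assumes ne: "HS \<noteq> {}" and sub: "HS \<subseteq> interior (cbox xlo xhi)"
  shows "0 < Xlo $ i $ i \<or> Xhi $ i $ i < 0"
    and "\<And>\<alpha> \<beta>. \<alpha> \<in> XI i i \<Longrightarrow> \<beta> \<in> gs_rhs XI BI (gs_state XI BI KI WI i) i \<Longrightarrow>
           \<beta> / \<alpha> \<in> {xlo $ i - xt $ i <..< xhi $ i - xt $ i}"
proof -
  let ?F = "gamma1 (XI i i) (gs_rhs XI BI (gs_state XI BI KI WI i) i) (WI i)"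
  have "gs_result XI BI KI WI i \<noteq> {}"
    "gs_result XI BI KI WI i \<subseteq> {xlo $ i - xt $ i <..< xhi $ i - xt $ i}"
    using product_set_in_box[of "gs_result XI BI KI WI" xt xlo xhi i] ne sub
    by (auto simp: GS_eq)
  then have F: "?F \<noteq> {}" "?F \<subseteq> {xlo $ i - xt $ i <..< xhi $ i - xt $ i}"
    by (simp_all add: gs_result_component)
  show "0 < Xlo $ i $ i \<or> Xhi $ i $ i < 0"
    using gamma1_interior_excludes_zero[OF K_sub_W F] .
  have "connected (BI i)" by (intro connected_continuous_image connected_Icc continuous_intros)
  then have rhs_conn: "connected (gs_rhs XI BI (gs_state XI BI KI WI i) i)"
    by (intro connected_gs_rhs) (simp_all add: connected_gs_state)
  show "\<beta> / \<alpha> \<in> {xlo $ i - xt $ i <..< xhi $ i - xt $ i}"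
    if "\<alpha> \<in> XI i i" "\<beta> \<in> gs_rhs XI BI (gs_state XI BI KI WI i) i" for \<alpha> \<beta>
    using gamma1_interior_quotients[OF K_sub_W rhs_conn F that] .
qed

text \<open>Hypotheses (ii) and (iii) of the theorem for a single member g = f(a, -) of the family.\<close>

context
  fixes g :: "real^'n::{finite,linorder} \<Rightarrow> real^'n::{finite,linorder}"
    and Jg :: "real^'n::{finite,linorder} \<Rightarrow> real^'n::{finite,linorder}^'n::{finite,linorder}"
    and D :: "(real^'n::{finite,linorder}) set"
  assumes D_box: "cbox xlo xhi \<subseteq> D"
    and deriv: "\<And>x. x \<in> D \<Longrightarrow> (g has_derivative (\<lambda>h. Jg x *v h)) (at x)"
    and g_xt: "g xt \<in> cbox ylo yhi"
    and J_in: "\<forall>x \<in> cbox xlo xhi. \<forall>i j. Jg x $ i $ j \<in> XI i j"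
begin

lemma row_equation:
  assumes x: "x \<in> cbox xlo xhi" and V: "\<forall>j. (x - xt) $ j \<in> V j"
  obtains \<alpha> \<beta> where "\<alpha> \<in> XI i i" "\<beta> \<in> gs_rhs XI BI V i" "g x $ i = \<alpha> * (x - xt) $ i - \<beta>"
proof -
  obtain \<xi> where \<xi>: "\<xi> \<in> cbox xlo xhi"
    "g x $ i - g xt $ i = (\<Sum>j\<in>UNIV. Jg \<xi> $ i $ j * (x - xt) $ j)"
    using mvt_row[OF deriv D_box xt_in x] by blast
  define a where "a j = Jg \<xi> $ i $ j" for j
  define \<beta> where "\<beta> = - g xt $ i - (\<Sum>j\<in>UNIV - {i}. a j * (x - xt) $ j)"
  have split: "(\<Sum>j\<in>UNIV. a j * (x - xt) $ j)
                 = a i * (x - xt) $ i + (\<Sum>j\<in>UNIV - {i}. a j * (x - xt) $ j)"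
    by (simp add: sum.remove)
  have "a i \<in> XI i i" using J_in \<xi>(1) by (simp add: a_def)
  moreover have "\<beta> \<in> gs_rhs XI BI V i"
    unfolding \<beta>_def using g_xt J_in \<xi>(1) V
    by (intro mem_gs_rhs) (auto simp: a_def mem_box_cart)
  moreover have "g x $ i = a i * (x - xt) $ i - \<beta>"
    using \<xi>(2) split unfolding \<beta>_def a_def by simp
  ultimately show ?thesis by (rule that)
qed

lemma zero_in_HS:
  assumes x: "x \<in> cbox xlo xhi" and gx: "g x = 0"
  shows "x \<in> HS"
proof -
  have "x - xt \<in> GS XI BI KI WI"
  proof (rule mem_GS)
    show "\<forall>j. (x - xt) $ j \<in> KI j" using x by (auto simp: mem_box_cart)
  next
    fix i assume "\<forall>j. (x - xt) $ j \<in> gs_state XI BI KI WI i j"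
    then obtain \<alpha> \<beta> where \<alpha>: "\<alpha> \<in> XI i i"
      and \<beta>: "\<beta> \<in> gs_rhs XI BI (gs_state XI BI KI WI i) i"
      and gi: "g x $ i = \<alpha> * (x - xt) $ i - \<beta>"
      using row_equation[OF x] by blast
    have "\<alpha> * (x - xt) $ i = \<beta>" using gi gx by simp
    then show "(x - xt) $ i \<in> gamma1 (XI i i) (gs_rhs XI BI (gs_state XI BI KI WI i) i) (WI i)"
      by (rule mem_gamma1[OF shifted_mem_W[OF x] \<alpha> \<beta>])
  qed
  then have "xt + (x - xt) \<in> HS" by (rule imageI)
  then show ?thesis by simp
qed

text \<open>Part (2), existence: a fixed point of the sign-corrected clamped map lies in the
  image, hence in the interior of [x], where it is a zero of g.\<close>

lemma zero_exists:
  assumes ne: "HS \<noteq> {}" and sub: "HS \<subseteq> interior (cbox xlo xhi)"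
  shows "\<exists>x\<in>cbox xlo xhi. g x = 0"
proof -
  define \<sigma> where "\<sigma> i = (if 0 < Xlo $ i $ i then 1 else - 1 :: real)" for i
  have \<sigma>_pos: "\<sigma> i * \<alpha> > 0" if "\<alpha> \<in> XI i i" for i \<alpha>
    using HS_interior_diagonal(1)[OF ne sub, of i] that by (auto simp: \<sigma>_def)
  have "continuous_on (cbox xlo xhi) g"
    using deriv D_box by (intro has_derivative_continuous_on) (auto intro: has_derivative_at_withinI)
  then obtain x where x: "x \<in> cbox xlo xhi"
    and fixed: "\<And>i. x $ i = max (xlo $ i) (min (xhi $ i) (x $ i - \<sigma> i * g x $ i))"
    using clamped_map_fixed_point[of xlo xhi g \<sigma>] xt_in by blast
  have "x - xt \<in> GS XI BI KI WI"
  proof (rule mem_GS)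
    show "\<forall>j. (x - xt) $ j \<in> KI j" using x by (auto simp: mem_box_cart)
  next
    fix i assume "\<forall>j. (x - xt) $ j \<in> gs_state XI BI KI WI i j"
    then obtain \<alpha> \<beta> where \<alpha>: "\<alpha> \<in> XI i i" and \<beta>: "\<beta> \<in> gs_rhs XI BI (gs_state XI BI KI WI i) i"
      and gi: "g x $ i = \<alpha> * (x - xt) $ i - \<beta>"
      using row_equation[OF x] by blast
    have "x $ i - xt $ i = \<beta> / \<alpha>"
      using clamp_fixed_point_root[of "xlo $ i" "x $ i" "xhi $ i" "\<sigma> i" \<alpha> "xt $ i" \<beta>]
        x fixed[of i] gi \<sigma>_pos[OF \<alpha>] HS_interior_diagonal(2)[OF ne sub \<alpha> \<beta>]
      by (auto simp: mem_box_cart)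
    then have "\<alpha> * (x - xt) $ i = \<beta>" using \<sigma>_pos[OF \<alpha>] by auto
    then show "(x - xt) $ i \<in> gamma1 (XI i i) (gs_rhs XI BI (gs_state XI BI KI WI i) i) (WI i)"
      by (rule mem_gamma1[OF shifted_mem_W[OF x] \<alpha> \<beta>])
  qed
  then have "x \<in> box xlo xhi" using sub by auto
  then have "g x $ i = 0" for i
    using clamp_fixed_point_interior[OF _ _ fixed[of i]] by (auto simp: mem_box_cart \<sigma>_def)
  then show ?thesis using x by (auto simp: vec_eq_iff)
qed

end

text \<open>Every matrix in [X] is regular when the image is nonempty and interior: for A d = 0
  with d nonzero, the affine map h(v) = A v + (ylo - A xt) has a zero v0 in [x], and its
  whole zero line v0 + t d would be a nonempty clopen subset of the line inside [x].\<close>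

lemma HS_interior_regular:
  assumes ne_y: "\<forall>i. ylo $ i \<le> yhi $ i"
    and ne: "HS \<noteq> {}" and sub: "HS \<subseteq> interior (cbox xlo xhi)"
    and A: "\<forall>i j. A $ i $ j \<in> XI i j" and Ad: "A *v d = 0"
  shows "d = 0"
proof (rule ccontr)
  assume "d \<noteq> 0"
  then obtain k where k: "d $ k \<noteq> 0" by (metis vec_eq_iff zero_index)
  define h where "h v = A *v v + (ylo - A *v xt)" for v
  have der: "(h has_derivative (\<lambda>v. A *v v)) (at v)" for v
    unfolding h_def by (intro has_derivative_add_const bounded_linear_imp_has_derivative) simp
  have h_xt: "h xt \<in> cbox ylo yhi" unfolding h_def using ne_y by (simp add: mem_box_cart)
  note h_facts = subset_UNIV der h_xt
  obtain v0 where v0: "v0 \<in> cbox xlo xhi" "h v0 = 0"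
    using zero_exists[OF h_facts _ ne sub] A by blast
  define line where "line t = v0 + t *\<^sub>R d" for t :: real
  have h_line: "h (line t) = 0" for t
    using v0(2) Ad unfolding h_def line_def by (simp add: algebra_simps)
  define Z where "Z = line -` cbox xlo xhi"
  have Z_box: "Z = line -` box xlo xhi"
    using zero_in_HS[OF h_facts _ _ h_line] A sub box_subset_cbox unfolding Z_def by fastforce
  have cont: "continuous (at t) line" for t unfolding line_def by (intro continuous_intros)
  have "open Z" unfolding Z_box by (intro continuous_open_vimage open_box cont)
  moreover have "closed Z" unfolding Z_def by (intro continuous_closed_vimage closed_cbox cont)
  moreover have "0 \<in> Z" unfolding Z_def line_def using v0 by simp
  ultimately have "Z = UNIV" using clopen[of Z] by auto
  then have "line ((xhi $ k - v0 $ k + 1) / d $ k) \<in> cbox xlo xhi" unfolding Z_def by blast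
  then have "line ((xhi $ k - v0 $ k + 1) / d $ k) $ k \<le> xhi $ k" unfolding mem_box_cart by blast
  moreover have "line ((xhi $ k - v0 $ k + 1) / d $ k) $ k = xhi $ k + 1"
    unfolding line_def using k by simp
  ultimately show False by simp
qed

text \<open>Part (2), uniqueness: two zeros in [x] differ by a kernel vector of a matrix in [X]
  assembled row by row from the mean value theorem.\<close>

lemma HS_interior_zero_unique:
  assumes ne_y: "\<forall>i. ylo $ i \<le> yhi $ i"
    and ne: "HS \<noteq> {}" and sub: "HS \<subseteq> interior (cbox xlo xhi)"
    and D_box: "cbox xlo xhi \<subseteq> D"
    and deriv: "\<And>x. x \<in> D \<Longrightarrow> (g has_derivative (\<lambda>h. Jg x *v h)) (at x)"
    and J_in: "\<forall>x \<in> cbox xlo xhi. \<forall>i j. Jg x $ i $ j \<in> XI i j"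
    and x: "x \<in> cbox xlo xhi" "g x = 0" and y: "y \<in> cbox xlo xhi" "g y = 0"
  shows "y = x"
proof -
  obtain \<xi> where \<xi>: "\<And>i. \<xi> i \<in> cbox xlo xhi \<and>
      g y $ i - g x $ i = (\<Sum>j\<in>UNIV. Jg (\<xi> i) $ i $ j * (y - x) $ j)"
    using mvt_row[OF deriv D_box x(1) y(1)] by metis
  define A where "A = (\<chi> i j. Jg (\<xi> i) $ i $ j)"
  have "\<forall>i j. A $ i $ j \<in> XI i j" unfolding A_def using J_in \<xi> by auto
  moreover have "A *v (y - x) = 0"
    using \<xi> x(2) y(2) unfolding A_def by (simp add: vec_eq_iff matrix_vector_mult_def)
  ultimately have "y - x = 0" using HS_interior_regular[OF ne_y ne sub] by blast
  then show ?thesis by simp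
qed

end


theorem theorem2:
  fixes f :: "real^'p \<Rightarrow> real^'n::{finite,linorder} \<Rightarrow> real^'n::{finite,linorder}"
    and J :: "real^'p \<Rightarrow> real^'n::{finite,linorder} \<Rightarrow> real^'n::{finite,linorder}^'n::{finite,linorder}"
    and D :: "real^'p \<Rightarrow> (real^'n::{finite,linorder}) set"
    and xlo xhi ylo yhi zlo zhi xt :: "real^'n::{finite,linorder}"
    and alo ahi :: "real^'p"
    and Xlo Xhi :: "real^'n::{finite,linorder}^'n::{finite,linorder}"
  assumes D_open: "\<And>a. open (D a)"
    and D_box: "\<And>a. cbox xlo xhi \<subseteq> D a"
    and deriv: "\<And>a x. x \<in> D a \<Longrightarrow> ((f a) has_derivative (\<lambda>h. J a x *v h)) (at x)"
    and ne_x: "\<forall>i. xlo $ i \<le> xhi $ i"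
    and ne_y: "\<forall>i. ylo $ i \<le> yhi $ i"
    and ne_z: "\<forall>i. zlo $ i \<le> zhi $ i"
    and ne_a: "\<forall>k. alo $ k \<le> ahi $ k"
    and ne_X: "\<forall>i j. Xlo $ i $ j \<le> Xhi $ i $ j"
    and xt_in: "xt \<in> cbox xlo xhi"
    and h1: "cbox xlo xhi \<subseteq> cbox zlo zhi"
    and h2: "\<forall>a \<in> cbox alo ahi. f a xt \<in> cbox ylo yhi"
    and h3: "\<forall>a \<in> cbox alo ahi. \<forall>x \<in> cbox xlo xhi. \<forall>i j.
               J a x $ i $ j \<in> {Xlo $ i $ j .. Xhi $ i $ j}"
  shows "(let x' = (\<lambda>v. xt + v) `
                GS (\<lambda>i j. {Xlo $ i $ j .. Xhi $ i $ j})
                   (\<lambda>i. uminus ` {ylo $ i .. yhi $ i})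
                   (\<lambda>i. {xlo $ i - xt $ i .. xhi $ i - xt $ i})
                   (\<lambda>i. {zlo $ i - xt $ i .. zhi $ i - xt $ i})
         in (\<forall>a \<in> cbox alo ahi. \<forall>x \<in> cbox xlo xhi. f a x = 0 \<longrightarrow> x \<in> x')
          \<and> (x' \<noteq> {} \<and> x' \<subseteq> interior (cbox xlo xhi) \<longrightarrow>
               (\<forall>a \<in> cbox alo ahi. \<exists>!x. x \<in> x' \<and> f a x = 0)))"
proof -
  define x' where "x' = (\<lambda>v. xt + v) `
                GS (\<lambda>i j. {Xlo $ i $ j .. Xhi $ i $ j})
                   (\<lambda>i. uminus ` {ylo $ i .. yhi $ i})
                   (\<lambda>i. {xlo $ i - xt $ i .. xhi $ i - xt $ i})
                   (\<lambda>i. {zlo $ i - xt $ i .. zhi $ i - xt $ i})"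
  note context_facts = xt_in h1 D_box deriv
  have incl: "x \<in> x'" if "a \<in> cbox alo ahi" "x \<in> cbox xlo xhi" "f a x = 0" for a x
    unfolding x'_def using zero_in_HS[OF context_facts] h2 h3 that by blast
  have "\<exists>!x. x \<in> x' \<and> f a x = 0"
    if ne: "x' \<noteq> {}" and sub: "x' \<subseteq> interior (cbox xlo xhi)" and a: "a \<in> cbox alo ahi" for a
  proof -
    obtain x where x: "x \<in> cbox xlo xhi" "f a x = 0"
      using zero_exists[OF context_facts _ _ ne[unfolded x'_def] sub[unfolded x'_def]] h2 h3 a
      by blast
    have "y = x" if "y \<in> x'" "f a y = 0" for y
      using HS_interior_zero_unique[OF xt_in h1 ne_y ne[unfolded x'_def] sub[unfolded x'_def]
          D_box deriv _ x] h3 a that sub interior_subset by blast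
    then show ?thesis using incl[OF a x] x by blast
  qed
  then show ?thesis using incl unfolding Let_def x'_def[symmetric] by blast
qed

end
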